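(* Let $(n_k)_{k\ge0}$ be a strictly increasing sequence of positive integers such that $n_k$ divides $n_{k+1}$ for every $k\ge0$ and $\limsup_{k\to\infty}n_{k+1}/n_k=+\infty$. Then there exists a compact perfect subset $K$ of $\mathbb{T}$ containing the point $1$ such that $\lambda^{n_k}\to1$ uniformly on $K$.
   Context: $\mathbb{T}$ is the unit circle in $\mathbb{C}$. *)

theory Defs
  imports "HOL-Analysis.Analysis"
begin

end

theory Submission
  imports Defs
begin

(* Choose indices p_0, p_1, ... with n_{p_j + 1} >= 2^j n_{p_j}
   (possible since the ratios n_{k+1}/n_k are unbounded), put
   m_j = n_{p_j + 1} and w_j = e^{2 pi i/m_j}, and let K be the closure of the
   set of all finite products of distinct w_j.

   K lies in the unit circle, is compact, contains 1 (the empty product) and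
   is perfect, because w_j -> 1 and w_j <> 1.  For the uniform convergence fix
   k: every w_j with p_j < k is an m_j-th root of unity with m_j | n_k, so
   w_j^{n_k} = 1; every other w_j satisfies |w_j^{n_k} - 1| <= 2 pi n_k/m_j
   <= 2 pi 2^{-j}.  Hence |z^{n_k} - 1| is bounded on finite products by a
   geometric tail, which tends to 0 as k grows, and the bound passes to the
   closure. *)

lemma norm_cis_minus_one_le: "norm (cis t - 1) \<le> \<bar>t\<bar>"
proof -
  have "(norm (cis t - 1))\<^sup>2 = (cos t - 1)\<^sup>2 + (sin t)\<^sup>2"
    by (simp add: cmod_power2)
  also have "\<dots> = 4 * (sin (t / 2))\<^sup>2"
    using cos_double_sin[of "t / 2"] sin_cos_squared_add[of t]
    by (simp add: power2_eq_square algebra_simps)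
  also have "\<dots> \<le> t\<^sup>2"
    using power_mono[OF abs_sin_x_le_abs_x abs_ge_zero, of "t / 2" 2]
    by (simp add: power2_eq_square)
  finally show ?thesis
    by (metis abs_ge_zero power2_abs power2_le_imp_le)
qed

lemma cis_two_pi_div_power_eq_one:
  assumes "m dvd N"
  shows "cis (2 * pi / real m) ^ N = 1"
proof -
  obtain q where "N = m * q" using assms by blast
  then show ?thesis
  proof (cases "m = 0")
    case False
    then have "cis (2 * pi / real m) ^ m = 1" by (simp add: Complex.DeMoivre)
    then show ?thesis using \<open>N = m * q\<close> by (simp add: power_mult)
  qed simp
qed

lemma norm_cis_two_pi_div_power_minus_one_le:
  "norm (cis (2 * pi / real m) ^ N - 1) \<le> 2 * pi * real N / real m"
  using norm_cis_minus_one_le[of "real N * (2 * pi / real m)"]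
  unfolding Complex.DeMoivre by (simp add: mult_ac)

lemma cis_two_pi_div_neq_one:
  assumes "2 \<le> m"
  shows "cis (2 * pi / real m) \<noteq> 1"
proof
  assume "cis (2 * pi / real m) = 1"
  moreover have "0 < 2 * pi / real m" "2 * pi / real m \<le> pi"
    using assms by (auto simp: field_simps)
  then have "2 * pi / real m \<in> {-pi<..pi}"
    using pi_gt_zero by auto
  ultimately have "2 * pi / real m = 0" using Arg_cis by fastforce
  with assms show False by simp
qed

lemma norm_prod_minus_one_le:
  fixes a :: "'i \<Rightarrow> 'a::real_normed_field"
  assumes "finite F" "\<And>j. j \<in> F \<Longrightarrow> norm (a j) \<le> 1"
  shows "norm ((\<Prod>j\<in>F. a j) - 1) \<le> (\<Sum>j\<in>F. norm (a j - 1))"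
  using assms
proof (induction F rule: finite_induct)
  case empty then show ?case by simp
next
  case (insert x F)
  have "(\<Prod>j\<in>insert x F. a j) - 1 = a x * ((\<Prod>j\<in>F. a j) - 1) + (a x - 1)"
    using insert by (simp add: algebra_simps)
  then have "norm ((\<Prod>j\<in>insert x F. a j) - 1)
      \<le> norm (a x) * norm ((\<Prod>j\<in>F. a j) - 1) + norm (a x - 1)"
    by (metis norm_mult norm_triangle_ineq)
  also have "\<dots> \<le> norm ((\<Prod>j\<in>F. a j) - 1) + norm (a x - 1)"
    using insert by (simp add: mult_left_le_one_le)
  finally show ?case using insert by (simp add: add.commute)
qed

lemma sum_power_tail_le:
  fixes q :: real
  assumes "0 \<le> q" "q < 1" "finite G" "G \<subseteq> {N..}"
  shows "(\<Sum>j\<in>G. q ^ j) \<le> q ^ N / (1 - q)"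
proof -
  obtain M where "G \<subseteq> {..<M}" using finite_nat_bounded assms(3) by blast
  with assms(4) have "G \<subseteq> {N..M}" by fastforce
  then have "(\<Sum>j\<in>G. q ^ j) \<le> (\<Sum>j=N..M. q ^ j)"
    by (intro sum_mono2) (use assms(1) in auto)
  also have "\<dots> \<le> q ^ N / (1 - q)"
    using assms(1,2) by (simp add: sum_gp divide_right_mono)
  finally show ?thesis .
qed

lemma dvd_chain_le:
  fixes n :: "nat \<Rightarrow> 'a::comm_monoid_mult"
  assumes "\<And>k. n k dvd n (Suc k)" "a \<le> b"
  shows "n a dvd n b"
  using assms(2)
proof (induction b rule: dec_induct)
  case (step b) then show ?case using assms(1) dvd_trans by blast
qed simp

lemma limsup_infinity_unbounded:
  assumes "limsup (\<lambda>k. ereal (r k)) = \<infinity>"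
  shows "\<exists>k. B \<le> r k"
proof (rule ccontr)
  assume "\<not> (\<exists>k. B \<le> r k)"
  then have "limsup (\<lambda>k. ereal (r k)) \<le> ereal B"
    by (intro Limsup_bounded) (auto simp: not_le less_imp_le)
  with assms show False by simp
qed

definition finite_subproducts :: "(nat \<Rightarrow> 'a::comm_monoid_mult) \<Rightarrow> 'a set" where
  "finite_subproducts w = (\<lambda>F. \<Prod>j\<in>F. w j) ` {F. finite F}"

lemma one_in_finite_subproducts: "1 \<in> finite_subproducts w"
  unfolding finite_subproducts_def by (auto intro!: image_eqI[of _ _ "{}"])

lemma finite_subproducts_subset_sphere:
  fixes w :: "nat \<Rightarrow> 'a::real_normed_field"
  assumes "\<And>j. norm (w j) = 1"
  shows "finite_subproducts w \<subseteq> sphere 0 1"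
  using assms by (auto simp: finite_subproducts_def prod_norm[symmetric])

(* If w_j -> 1 with w_j different from 0 and 1, no finite subproduct x is
   isolated: multiplying x by a far-out new factor w_{i+c} gives points
   different from x that converge to x. *)
lemma islimpt_finite_subproducts:
  fixes w :: "nat \<Rightarrow> 'a::real_normed_field"
  assumes nonzero: "\<And>j. w j \<noteq> 0" and ne_one: "\<And>j. w j \<noteq> 1" and lim: "w \<longlonglongrightarrow> 1"
    and x: "x \<in> finite_subproducts w"
  shows "x islimpt finite_subproducts w"
proof -
  obtain F where F: "finite F" "x = (\<Prod>j\<in>F. w j)"
    using x by (auto simp: finite_subproducts_def)
  obtain c where c: "F \<subseteq> {..<c}" using finite_nat_bounded F(1) by blast
  have x_nonzero: "x \<noteq> 0" using F nonzero by simp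
  have extend: "(\<Prod>j\<in>insert (i + c) F. w j) = w (i + c) * x" for i
    using F c by (subst prod.insert) auto
  have "w (i + c) * x \<in> finite_subproducts w - {x}" for i
  proof -
    have "w (i + c) * x \<in> finite_subproducts w"
      using F(1) extend[of i, symmetric] by (auto simp: finite_subproducts_def)
    moreover have "w (i + c) * x \<noteq> x"
      using x_nonzero ne_one[of "i + c"] by (metis mult_cancel_right2)
    ultimately show ?thesis by simp
  qed
  moreover have "(\<lambda>i. w (i + c) * x) \<longlonglongrightarrow> 1 * x"
    using LIMSEQ_ignore_initial_segment[OF lim, of c] by (intro tendsto_intros)
  ultimately show ?thesis
    unfolding islimpt_sequential by (intro exI[of _ "\<lambda>i. w (i + c) * x"]) simp
qed

lemma islimpt_closure_of_dense_in_itself: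
  fixes S :: "'a::metric_space set"
  assumes "\<And>x. x \<in> S \<Longrightarrow> x islimpt S" "x \<in> closure S"
  shows "x islimpt closure S"
proof -
  have "x \<in> S \<or> x islimpt S" using assms(2) by (simp add: closure_def)
  then show ?thesis using assms(1) by (auto simp: limpt_of_closure)
qed

(* Uniform convergence of continuous functions on S extends to the closure of S,
   since each sublevel set of the distance is closed. *)
lemma uniform_limit_closure:
  fixes f :: "'i \<Rightarrow> 'a::metric_space \<Rightarrow> 'b::metric_space"
  assumes unif: "uniform_limit S f g F"
    and cont: "\<And>k. continuous_on UNIV (f k)" "continuous_on UNIV g"
  shows "uniform_limit (closure S) f g F"
  unfolding uniform_limit_iff
proof (intro allI impI)
  fix e :: real assume "0 < e"
  then have "0 < e / 2" by simp
  then have "\<forall>\<^sub>F k in F. \<forall>x\<in>S. dist (f k x) (g x) < e / 2"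
    using unif unfolding uniform_limit_iff by blast
  then show "\<forall>\<^sub>F k in F. \<forall>x\<in>closure S. dist (f k x) (g x) < e"
  proof (rule eventually_mono)
    fix k assume "\<forall>x\<in>S. dist (f k x) (g x) < e / 2"
    then have "S \<subseteq> {x. dist (f k x) (g x) \<le> e / 2}" by fastforce
    moreover have "closed {x. dist (f k x) (g x) \<le> e / 2}"
      using cont by (intro closed_Collect_le continuous_on_dist) auto
    ultimately have "closure S \<subseteq> {x. dist (f k x) (g x) \<le> e / 2}"
      by (rule closure_minimal)
    with \<open>0 < e\<close> show "\<forall>x\<in>closure S. dist (f k x) (g x) < e" by fastforce
  qed
qed

lemma norm_root_power_minus_one_le:
  fixes m a N :: nat
  assumes "2 ^ j * a \<le> m" "N \<le> a"
  shows "norm (cis (2 * pi / real m) ^ N - 1) \<le> 2 * pi * (1 / 2) ^ j"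
proof -
  have lacunary: "2 ^ j * real a \<le> real m"
    using assms(1) by (metis of_nat_le_iff of_nat_mult of_nat_numeral of_nat_power)
  have "real N / real m \<le> real a / real m"
    using assms(2) by (simp add: divide_right_mono)
  also have "\<dots> \<le> (1 / 2) ^ j"
  proof (cases "m = 0")
    case False
    have "real a = (1 / 2) ^ j * (2 ^ j * real a)" by (simp add: power_one_over)
    also have "\<dots> \<le> (1 / 2) ^ j * real m" using lacunary by (intro mult_left_mono) simp_all
    finally show ?thesis using False by (simp add: pos_divide_le_eq)
  qed simp
  finally have "2 * pi * (real N / real m) \<le> 2 * pi * (1 / 2) ^ j"
    by (rule mult_left_mono) simp
  moreover have "2 * pi * real N / real m = 2 * pi * (real N / real m)" by simp
  ultimately show ?thesis using norm_cis_two_pi_div_power_minus_one_le[of m N] by linarith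
qed

lemma tendsto_cis_two_pi_div:
  fixes m :: "nat \<Rightarrow> nat"
  assumes "\<And>j. 2 ^ j \<le> m j"
  shows "(\<lambda>j. cis (2 * pi / real (m j))) \<longlonglongrightarrow> 1"
proof -
  have bound: "norm (cis (2 * pi / real (m j)) - 1) \<le> 2 * pi * (1 / 2) ^ j" for j
  proof -
    have "2 ^ j * 1 \<le> m j" using assms[of j] by simp
    from norm_root_power_minus_one_le[OF this order_refl] show ?thesis
      by (simp only: power_one_right)
  qed
  have "(\<lambda>j. 2 * pi * (1 / 2 :: real) ^ j) \<longlonglongrightarrow> 0"
    by (intro tendsto_mult_right_zero LIMSEQ_power_zero) simp_all
  then have "(\<lambda>j. cis (2 * pi / real (m j)) - 1) \<longlonglongrightarrow> 0"
    by (rule Lim_null_comparison[OF always_eventually[OF allI[OF bound]]])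
  then show ?thesis by (rule LIM_zero_cancel)
qed

(* Then z^{N k} -> 1
   uniformly on the finite subproducts, since by norm_prod_minus_one_le the
   error is bounded by the geometric tail c q^M/(1 - q). *)
lemma uniform_limit_power_finite_subproducts:
  fixes w :: "nat \<Rightarrow> 'a::real_normed_field" and N :: "nat \<Rightarrow> nat" and J :: "nat \<Rightarrow> nat set"
  assumes unit: "\<And>j. norm (w j) = 1" and q: "0 \<le> q" "q < 1" and c: "0 \<le> c"
    and inactive: "\<And>k j. j \<notin> J k \<Longrightarrow> w j ^ N k = 1"
    and active: "\<And>k j. j \<in> J k \<Longrightarrow> norm (w j ^ N k - 1) \<le> c * q ^ j"
    and tail: "\<And>M. \<forall>\<^sub>F k in sequentially. J k \<subseteq> {M..}"
  shows "uniform_limit (finite_subproducts w) (\<lambda>k z. z ^ N k) (\<lambda>z. 1) sequentially"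
proof -
  have bound: "norm ((\<Prod>j\<in>F. w j) ^ N k - 1) \<le> c * (q ^ M / (1 - q))"
    if F: "finite F" and JM: "J k \<subseteq> {M..}" for F k M
  proof -
    have "norm ((\<Prod>j\<in>F. w j) ^ N k - 1) = norm ((\<Prod>j\<in>F. w j ^ N k) - 1)"
      by (simp add: prod_power_distrib)
    also have "\<dots> \<le> (\<Sum>j\<in>F. norm (w j ^ N k - 1))"
      using F unit by (intro norm_prod_minus_one_le) (simp_all add: norm_power)
    also have "\<dots> \<le> (\<Sum>j\<in>F. if j \<in> J k then c * q ^ j else 0)"
      using active inactive by (intro sum_mono) simp
    also have "\<dots> = c * (\<Sum>j\<in>{j\<in>F. j \<in> J k}. q ^ j)"
      using F by (auto simp: sum.inter_filter sum_distrib_left intro!: sum.cong)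
    also have "\<dots> \<le> c * (q ^ M / (1 - q))"
      using F JM q c by (intro mult_left_mono sum_power_tail_le) auto
    finally show ?thesis .
  qed
  show ?thesis
    unfolding uniform_limit_iff
  proof (intro allI impI)
    fix e :: real assume "0 < e"
    have "(\<lambda>M. c * (q ^ M / (1 - q))) \<longlonglongrightarrow> c * (0 / (1 - q))"
      using q by (intro tendsto_intros LIMSEQ_power_zero) auto
    then have "\<forall>\<^sub>F M in sequentially. c * (q ^ M / (1 - q)) < e"
      using \<open>0 < e\<close> by (intro order_tendstoD(2)) simp_all
    then obtain M where M: "c * (q ^ M / (1 - q)) < e"
      by (auto simp: eventually_sequentially)
    show "\<forall>\<^sub>F k in sequentially. \<forall>x\<in>finite_subproducts w. dist (x ^ N k) 1 < e"
      using tail[of M] by eventually_elim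
        (auto simp: finite_subproducts_def dist_norm intro: le_less_trans[OF bound M])
  qed
qed

lemma ex_lacunary_indices:
  fixes n :: "nat \<Rightarrow> nat"
  assumes pos: "\<And>k. 0 < n k"
    and unbounded: "limsup (\<lambda>k. ereal (real (n (Suc k)) / real (n k))) = \<infinity>"
  obtains p where "\<And>j. 2 ^ j * n (p j) \<le> n (Suc (p j))"
proof -
  have "\<exists>k. 2 ^ j * n k \<le> n (Suc k)" for j
  proof -
    obtain k where "real (2 ^ j) \<le> real (n (Suc k)) / real (n k)"
      using limsup_infinity_unbounded[OF unbounded] by blast
    then have "real (2 ^ j * n k) \<le> real (n (Suc k))"
      using pos[of k] by (simp add: pos_le_divide_eq)
    then show ?thesis by (intro exI[of _ k]) (simp only: of_nat_le_iff)
  qed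
  then show ?thesis using that by metis
qed

lemma eventually_indices_beyond:
  fixes p :: "nat \<Rightarrow> nat"
  shows "\<forall>\<^sub>F k in sequentially. {j. k \<le> p j} \<subseteq> {M..}"
proof -
  obtain B where B: "p ` {..<M} \<subseteq> {..<B}"
    using finite_nat_bounded by blast
  show ?thesis
    unfolding eventually_sequentially
  proof (intro exI allI impI subsetI)
    fix k j assume "B \<le> k" "j \<in> {j. k \<le> p j}"
    then show "j \<in> {M..}" using B by (fastforce simp: not_le)
  qed
qed

(* The key estimate for w_j = e^{2 pi i/m_j}, m_j = n_{p_j + 1}: for
   p_j < k, m_j divides n_k, and for p_j >= k, n_k/m_j <= n_{p_j}/m_j <= 2^{-j}. *)
lemma uniform_limit_power_lacunary_roots:
  fixes n p :: "nat \<Rightarrow> nat"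
  assumes mono: "mono n" and dvd: "\<And>k. n k dvd n (Suc k)"
    and lac: "\<And>j. 2 ^ j * n (p j) \<le> n (Suc (p j))"
  shows "uniform_limit (finite_subproducts (\<lambda>j. cis (2 * pi / real (n (Suc (p j))))))
           (\<lambda>k z. z ^ n k) (\<lambda>z. 1) sequentially"
proof (rule uniform_limit_power_finite_subproducts[where J = "\<lambda>k. {j. k \<le> p j}"
      and q = "1 / 2" and c = "2 * pi"])
  fix k j
  assume "j \<notin> {j. k \<le> p j}"
  then have "n (Suc (p j)) dvd n k" by (intro dvd_chain_le[of n, OF dvd]) simp
  then show "cis (2 * pi / real (n (Suc (p j)))) ^ n k = 1"
    by (rule cis_two_pi_div_power_eq_one)
next
  fix k j
  assume "j \<in> {j. k \<le> p j}"
  then have "n k \<le> n (p j)" using mono by (simp add: monoD)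
  then show "norm (cis (2 * pi / real (n (Suc (p j)))) ^ n k - 1) \<le> 2 * pi * (1 / 2) ^ j"
    by (rule norm_root_power_minus_one_le[OF lac])
qed (simp_all add: eventually_indices_beyond)

lemma perfect_closure_finite_subproducts:
  fixes w :: "nat \<Rightarrow> 'a::{real_normed_field, heine_borel}"
  assumes unit: "\<And>j. norm (w j) = 1" and ne_one: "\<And>j. w j \<noteq> 1" and lim: "w \<longlonglongrightarrow> 1"
  defines "K \<equiv> closure (finite_subproducts w)"
  shows "K \<subseteq> sphere 0 1" and "compact K" and "\<forall>x\<in>K. x islimpt K" and "1 \<in> K"
proof -
  show "K \<subseteq> sphere 0 1"
    unfolding K_def using unit by (intro closure_minimal finite_subproducts_subset_sphere) auto
  then have "bounded K" using bounded_sphere bounded_subset by blast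
  then show "compact K" by (simp add: K_def compact_eq_bounded_closed)
  have nonzero: "w j \<noteq> 0" for j using unit[of j] by auto
  have "x islimpt finite_subproducts w" if "x \<in> finite_subproducts w" for x
    using islimpt_finite_subproducts[OF nonzero ne_one lim that] .
  then show "\<forall>x\<in>K. x islimpt K"
    unfolding K_def by (intro ballI islimpt_closure_of_dense_in_itself)
  show "1 \<in> K"
    unfolding K_def using closure_subset one_in_finite_subproducts by blast
qed

theorem proposition3p7:
  fixes n :: "nat \<Rightarrow> nat"
  assumes "strict_mono n"
    and "\<And>k. 0 < n k"
    and "\<And>k. n k dvd n (Suc k)"
    and "limsup (\<lambda>k. ereal (real (n (Suc k)) / real (n k))) = \<infinity>"
  shows "\<exists>K :: complex set. K \<subseteq> sphere 0 1 \<and> compact K \<and> (\<forall>x\<in>K. x islimpt K)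
           \<and> 1 \<in> K \<and> uniform_limit K (\<lambda>k z. z ^ n k) (\<lambda>z. 1) sequentially"
proof -
  obtain p where lac: "\<And>j. 2 ^ j * n (p j) \<le> n (Suc (p j))"
    using ex_lacunary_indices assms(2,4) by blast
  define w where "w j = cis (2 * pi / real (n (Suc (p j))))" for j
  have big: "2 ^ j \<le> n (Suc (p j))" and two: "2 \<le> n (Suc (p j))" for j
    using lac[of j] assms(2)[of "p j"] strict_monoD[OF assms(1), of "p j" "Suc (p j)"]
    by (auto intro: order_trans[OF _ lac[of j]])
  have unit: "\<And>j. norm (w j) = 1" by (simp add: w_def)
  have ne_one: "\<And>j. w j \<noteq> 1"
    unfolding w_def by (rule cis_two_pi_div_neq_one[OF two])
  have lim: "w \<longlonglongrightarrow> 1"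
    unfolding w_def by (rule tendsto_cis_two_pi_div[OF big])
  have "uniform_limit (finite_subproducts w) (\<lambda>k z. z ^ n k) (\<lambda>z. 1) sequentially"
    unfolding w_def using strict_mono_mono[OF assms(1)] assms(3) lac
    by (rule uniform_limit_power_lacunary_roots)
  then have "uniform_limit (closure (finite_subproducts w)) (\<lambda>k z. z ^ n k) (\<lambda>z. 1) sequentially"
    by (rule uniform_limit_closure) (intro continuous_intros)+
  with perfect_closure_finite_subproducts[OF unit ne_one lim] show ?thesis
    by (intro exI[of _ "closure (finite_subproducts w)"]) simp
qed

end
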